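(* Let $(\Omega,\Sigma,P)$ be an atomless probability space with a filtration $\mathcal{F}=\{\mathcal{F}_n\}_{n\ge 0}$ such that each $\mathcal{F}_n$ is generated by an at most countable family $\mathcal{A}(\mathcal{F}_n)$ of atoms and $\bigcup_n\mathcal{F}_n$ generates $\Sigma$. Let $\alpha\in(0,1)$ and $p=\frac{1}{\alpha}$. Define $b_n=\sum_{w\in\mathcal{A}(\mathcal{F}_n)}P(w)\chi_w$ and, for a random variable $F$ with $F_n=\mathbb{E}(F\mid\mathcal{F}_n)$, $\Delta F_n=F_n-F_{n-1}$, $$I^{\mathcal{A}}_\alpha[F]=\sum_{n=1}^\infty b_n^{\alpha}\,\Delta F_n.$$ Then there is a constant $C$ such that for every simple function $F$, $$\|I^{\mathcal{A}}_\alpha[F]\|_{L_\infty}\le C\|F\|_{L_{p,1}}.$$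
   Context: A simple function is a random variable that is $\mathcal{F}_N$-measurable for some $N$ (so the series is a finite sum). The Lorentz quasi-norm is $\|f\|_{L_{p,1}}=\int_0^\infty \big(P(|f|>t)\big)^{1/p}\,dt$, i.e. the $L_1(\mathbb{R}_+,dt/t)$ norm of $t\mapsto t\,(P(|f|>t))^{1/p}$. *)

theory Defs
  imports "HOL-Probability.Probability"
begin

definition atomless :: "'a measure \<Rightarrow> bool" where
  "atomless M \<longleftrightarrow> (\<forall>A\<in>sets M. measure M A > 0 \<longrightarrow>
      (\<exists>B\<in>sets M. B \<subseteq> A \<and> 0 < measure M B \<and> measure M B < measure M A))"

definition atom_weight :: "'a measure \<Rightarrow> 'a set set \<Rightarrow> 'a \<Rightarrow> real" where
  "atom_weight M A x = (\<Sum>\<^sub>\<infinity>w\<in>A. measure M w * indicator w x)"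

definition I_alpha :: "'a measure \<Rightarrow> (nat \<Rightarrow> 'a measure) \<Rightarrow> (nat \<Rightarrow> 'a set set)
    \<Rightarrow> real \<Rightarrow> ('a \<Rightarrow> real) \<Rightarrow> 'a \<Rightarrow> real" where
  "I_alpha M \<F> A \<alpha> f x = (\<Sum>n. atom_weight M (A (Suc n)) x powr \<alpha> *
      (real_cond_exp M (\<F> (Suc n)) f x - real_cond_exp M (\<F> n) f x))"

definition lorentz_p1 :: "'a measure \<Rightarrow> real \<Rightarrow> ('a \<Rightarrow> real) \<Rightarrow> ennreal" where
  "lorentz_p1 M p f = (\<integral>\<^sup>+ t. indicator {0<..} t *
      ennreal (measure M {x\<in>space M. \<bar>f x\<bar> > t} powr (1 / p)) \<partial>lborel)"

end

theory Submission
  imports Defs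
begin

(* Fix a point x and let w_0 \<supseteq> w_1 \<supseteq> ... be the atoms containing it, b_n = P(w_n).
   On w_n the martingale F_n is the average of F over w_n, and F_n = F from the level N on
   which F is measurable, so I[F](x) is a finite sum. Abel summation turns it into a
   combination of the averages F_n(x) with the nonnegative weights b_1^alpha,
   b_n^alpha - b_(n+1)^alpha and b_N^alpha. By the layer cake formula
   |F_n(x)| \<le> \<integral>_0^\<infinity> q_n(t) dt with q_n(t) = P(w_n \<inter> {|F| > t}) / b_n, and
   0 \<le> q_n(t) \<le> min 1 (D(t) / b_n) for D(t) = P(|F| > t). Comparing the weighted sum with the
   Stieltjes integral of min 1 (D(t) / u) against d(u^alpha) bounds it by
   (2 + 1 / (1 - alpha)) D(t)^alpha, and integrating in t gives the claim.
   Since p \<ge> 1, the Lorentz norm dominates the L_1 norm, so F is integrable whenever the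
   right-hand side is finite. *)

lemma powr_mult_le_powr_of_mult_le:
  fixes a b q D :: real
  assumes a: "0 < a" "a \<le> 1" and b: "0 < b" and q: "0 \<le> q" "q \<le> 1" "q * b \<le> D"
  shows "b powr a * q \<le> D powr a"
proof -
  have "q \<le> q powr a"
    using q a powr_mono'[of a 1 q] by (cases "q = 0") auto
  then have "b powr a * q \<le> b powr a * q powr a" by (simp add: mult_left_mono)
  also have "\<dots> = (q * b) powr a" using b q by (simp add: powr_mult)
  also have "\<dots> \<le> D powr a" using q b a by (intro powr_mono2) auto
  finally show ?thesis .
qed

(* Both sides are integrals over [c, s]: of a u^(a-1) / s on the left and of the larger
   a u^(a-2) on the right. *)
lemma powr_diff_div_le:
  fixes a c s :: real
  assumes a: "0 < a" "a < 1" and c: "0 < c" "c \<le> s"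
  shows "(s powr a - c powr a) / s \<le> a / (1 - a) * (c powr (a - 1) - s powr (a - 1))"
proof -
  have s: "0 < s" using c by linarith
  define u v where "u = s powr a" and "v = c powr a"
  have v: "v > 0" using c by (simp add: v_def)
  have "s powr a * c powr (1 - a) \<le> a * s + (1 - a) * c"
    by (rule Youngs_inequality_0) (use a s c in auto)
  then have young: "u * c \<le> v * (a * s + (1 - a) * c)"
    using c v by (simp add: u_def v_def powr_diff field_simps)
  have "a / (1 - a) * (v / c - u / s) - (u - v) / s
      = (a * (v * s - u * c) - (1 - a) * (u - v) * c) / ((1 - a) * (s * c))"
    using a s c by (simp add: field_simps)
  also have "\<dots> \<ge> 0"
    using young a s c by (intro divide_nonneg_pos) (auto simp: algebra_simps)
  finally show ?thesis
    using s c by (simp add: u_def v_def powr_diff)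
qed

(* The closed form of the Stieltjes integral of min 1 (D / u) against d(u^a) over [0, s]. *)
definition capped_powr_primitive :: "real \<Rightarrow> real \<Rightarrow> real \<Rightarrow> real" where
  "capped_powr_primitive a D s =
     (if s \<le> D then s powr a else D powr a + a / (1 - a) * (D powr a - D * s powr (a - 1)))"

lemma capped_powr_primitive_bounds:
  assumes a: "0 < a" "a < 1" and D: "0 < D" and s: "0 < s"
  shows "0 \<le> capped_powr_primitive a D s" "capped_powr_primitive a D s \<le> D powr a / (1 - a)"
proof -
  have aa: "a / (1 - a) \<ge> 0" using a by auto
  have "D * s powr (a - 1) \<le> D powr a" if "D < s"
  proof -
    have "D * s powr (a - 1) \<le> D * D powr (a - 1)"
      using D that a by (intro mult_left_mono powr_mono2') auto
    also have "\<dots> = D powr a" using D by (simp add: powr_diff)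
    finally show ?thesis .
  qed
  then have "0 \<le> a / (1 - a) * (D powr a - D * s powr (a - 1))" if "D < s"
    using aa that by (intro mult_nonneg_nonneg) auto
  then show "0 \<le> capped_powr_primitive a D s"
    by (auto simp: capped_powr_primitive_def)
  have "s powr a \<le> D powr a / (1 - a)" if "s \<le> D"
  proof -
    have "s powr a \<le> D powr a" using that s a by (intro powr_mono2) auto
    also have "\<dots> \<le> D powr a / (1 - a)" using a by (simp add: le_divide_eq algebra_simps)
    finally show ?thesis .
  qed
  moreover have "a / (1 - a) * (D powr a - D * s powr (a - 1)) \<le> a / (1 - a) * D powr a"
    using aa D by (intro mult_left_mono) auto
  moreover have "D powr a + a / (1 - a) * D powr a = D powr a / (1 - a)"
    using a by (simp add: field_simps)
  ultimately show "capped_powr_primitive a D s \<le> D powr a / (1 - a)"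
    by (auto simp: capped_powr_primitive_def)
qed

lemma capped_powr_primitive_diff_ge:
  assumes a: "0 < a" "a < 1" and D: "0 < D" and c: "0 < c" "c \<le> s"
  shows "(s powr a - c powr a) * min 1 (D / s) \<le> capped_powr_primitive a D s - capped_powr_primitive a D c"
proof -
  have s: "0 < s" using c by linarith
  consider "s \<le> D" | "D < c" | "c \<le> D" "D < s" by linarith
  then show ?thesis
  proof cases
    case 1
    then show ?thesis using c s by (simp add: capped_powr_primitive_def)
  next
    case 2
    have "(s powr a - c powr a) * min 1 (D / s) = D * ((s powr a - c powr a) / s)"
      using s 2 c by (simp add: min_def)
    also have "\<dots> \<le> D * (a / (1 - a) * (c powr (a - 1) - s powr (a - 1)))"
      using powr_diff_div_le[OF a c] D by (intro mult_left_mono) auto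
    finally show ?thesis using 2 c by (simp add: capped_powr_primitive_def algebra_simps)
  next
    case 3
    have "(s powr a - c powr a) * min 1 (D / s)
        = D * ((s powr a - D powr a) / s) + (D powr a - c powr a) * (D / s)"
      using s 3 by (simp add: min_def field_simps)
    also have "\<dots> \<le> D * (a / (1 - a) * (D powr (a - 1) - s powr (a - 1))) + (D powr a - c powr a) * 1"
    proof (intro add_mono mult_left_mono)
      show "(s powr a - D powr a) / s \<le> a / (1 - a) * (D powr (a - 1) - s powr (a - 1))"
        using powr_diff_div_le[OF a D, of s] 3 by simp
      show "0 \<le> D powr a - c powr a" using 3 c a by (simp add: powr_mono2)
    qed (use D 3 s in auto)
    also have "\<dots> = capped_powr_primitive a D s - capped_powr_primitive a D c"
      using 3 D powr_add[of D 1 "a - 1"] by (simp add: capped_powr_primitive_def algebra_simps)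
    finally show ?thesis .
  qed
qed

lemma sum_powr_diff_mult_le:
  fixes b q :: "nat \<Rightarrow> real" and D a :: real
  assumes a: "0 < a" "a < 1" and D: "0 < D" and b: "\<And>n. 0 < b n" "\<And>n. b (Suc n) \<le> b n"
    and q: "\<And>n. q n \<le> 1" "\<And>n. q n * b n \<le> D" and "m \<le> N"
  shows "(\<Sum>n\<in>{m..<N}. (b n powr a - b (Suc n) powr a) * q n) \<le> D powr a / (1 - a)"
proof -
  let ?G = "\<lambda>n. capped_powr_primitive a D (b n)"
  have "(\<Sum>n\<in>{m..<N}. (b n powr a - b (Suc n) powr a) * q n) \<le> (\<Sum>n\<in>{m..<N}. ?G n - ?G (Suc n))"
  proof (rule sum_mono)
    fix n
    have "q n \<le> min 1 (D / b n)" using q[of n] b(1)[of n] by (simp add: field_simps)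
    then have "(b n powr a - b (Suc n) powr a) * q n \<le> (b n powr a - b (Suc n) powr a) * min 1 (D / b n)"
      using b(2)[of n] b(1)[of "Suc n"] a by (intro mult_left_mono) (simp_all add: powr_mono2)
    also have "\<dots> \<le> ?G n - ?G (Suc n)"
      by (rule capped_powr_primitive_diff_ge[OF a D b(1) b(2)])
    finally show "(b n powr a - b (Suc n) powr a) * q n \<le> ?G n - ?G (Suc n)" .
  qed
  also have "\<dots> = ?G m - ?G N"
    using sum_Suc_diff'[OF \<open>m \<le> N\<close>, of "\<lambda>n. - ?G n"] by simp
  also have "\<dots> \<le> D powr a / (1 - a)"
    using capped_powr_primitive_bounds[OF a D b(1)[of m]] capped_powr_primitive_bounds[OF a D b(1)[of N]]
    by linarith
  finally show ?thesis .
qed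

definition abel_coeff :: "(nat \<Rightarrow> real) \<Rightarrow> nat \<Rightarrow> nat \<Rightarrow> real" where
  "abel_coeff \<beta> N n = (if 1 \<le> n then \<beta> n else 0) - (if n < N then \<beta> (Suc n) else 0)"

lemma sum_by_parts_abel_coeff:
  "(\<Sum>n<N. \<beta> (Suc n) * (y (Suc n) - y n)) = (\<Sum>n\<le>N. abel_coeff \<beta> N n * y n)"
proof (induction N)
  case (Suc N)
  have "(\<Sum>n\<le>N. abel_coeff \<beta> (Suc N) n * y n)
      = (\<Sum>n\<le>N. abel_coeff \<beta> N n * y n - (if n = N then \<beta> (Suc N) * y N else 0))"
    by (intro sum.cong) (auto simp: abel_coeff_def algebra_simps)
  then have "(\<Sum>n\<le>Suc N. abel_coeff \<beta> (Suc N) n * y n)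
      = (\<Sum>n\<le>N. abel_coeff \<beta> N n * y n) + \<beta> (Suc N) * (y (Suc N) - y N)"
    by (simp add: sum_subtractf abel_coeff_def[of _ "Suc N" "Suc N"] algebra_simps)
  with Suc show ?case by simp
qed (simp add: abel_coeff_def)

lemma sum_abs_abel_coeff:
  fixes \<beta> q :: "nat \<Rightarrow> real"
  assumes \<beta>: "\<And>n. 0 \<le> \<beta> n" "\<And>n. \<beta> (Suc n) \<le> \<beta> n" and N: "1 \<le> N"
  shows "(\<Sum>n\<le>N. \<bar>abel_coeff \<beta> N n\<bar> * q n)
       = \<beta> 1 * q 0 + (\<Sum>n\<in>{1..<N}. (\<beta> n - \<beta> (Suc n)) * q n) + \<beta> N * q N"
proof -
  have "{..N} = insert 0 (insert N {1..<N})" using N by auto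
  moreover have "(\<Sum>n\<in>{1..<N}. \<bar>abel_coeff \<beta> N n\<bar> * q n) = (\<Sum>n\<in>{1..<N}. (\<beta> n - \<beta> (Suc n)) * q n)"
    using \<beta>(2) by (intro sum.cong) (auto simp: abel_coeff_def)
  ultimately show ?thesis using N \<beta>(1) by (simp add: abel_coeff_def algebra_simps)
qed

lemma sum_abs_abel_coeff_powr_le:
  fixes b q :: "nat \<Rightarrow> real" and D a :: real
  assumes a: "0 < a" "a < 1" and b: "\<And>n. 0 < b n" "\<And>n. b (Suc n) \<le> b n"
    and q: "\<And>n. 0 \<le> q n" "\<And>n. q n \<le> 1" "\<And>n. q n * b n \<le> D"
  shows "(\<Sum>n\<le>N. \<bar>abel_coeff (\<lambda>n. b n powr a) N n\<bar> * q n) \<le> (2 + 1 / (1 - a)) * D powr a"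
proof (cases "N = 0 \<or> D \<le> 0")
  case True
  have "q n = 0" if "D \<le> 0" for n
    using q(1)[of n] q(3)[of n] b(1)[of n] that by (metis mult_pos_pos not_le order.trans antisym_conv1)
  then show ?thesis using True a by (auto simp: abel_coeff_def)
next
  case False
  then have N: "1 \<le> N" and D: "0 < D" by auto
  have "b 1 powr a * q 0 \<le> b 0 powr a * q 0"
    using b a q(1)[of 0] by (intro mult_right_mono powr_mono2) (auto intro: less_imp_le)
  also have "\<dots> \<le> D powr a" using a by (intro powr_mult_le_powr_of_mult_le b q) auto
  finally have "b 1 powr a * q 0 \<le> D powr a" .
  moreover have "b N powr a * q N \<le> D powr a" using a by (intro powr_mult_le_powr_of_mult_le b q) auto
  moreover have "(\<Sum>n\<in>{1..<N}. (b n powr a - b (Suc n) powr a) * q n) \<le> D powr a / (1 - a)"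
    using N by (intro sum_powr_diff_mult_le[OF a D] b q)
  moreover have "\<And>n. b (Suc n) powr a \<le> b n powr a"
    using a b by (intro powr_mono2) (auto intro: less_imp_le)
  ultimately show ?thesis
    by (subst sum_abs_abel_coeff) (use N a in \<open>auto simp: algebra_simps\<close>)
qed

lemma nn_integral_layer_cake:
  fixes g :: "'a \<Rightarrow> real"
  assumes "sigma_finite_measure M" and [measurable]: "g \<in> borel_measurable M" "S \<in> sets M"
  shows "(\<integral>\<^sup>+y. indicator S y * ennreal (g y) \<partial>M)
       = (\<integral>\<^sup>+t. indicator {0<..} t * emeasure M {y\<in>S. t < g y} \<partial>lborel)"
proof -
  interpret pair_sigma_finite M lborel
    unfolding pair_sigma_finite_def using assms(1) lborel.sigma_finite_measure_axioms by blast
  let ?h = "\<lambda>y t. indicator S y * indicator {0<..<g y} t :: ennreal"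
  have "?h y t = indicator {p\<in>space (M \<Otimes>\<^sub>M lborel). fst p \<in> S \<and> 0 < snd p \<and> snd p < g (fst p)} (y, t)"
    for y t using sets.sets_into_space[OF assms(3)] by (auto simp: indicator_def space_pair_measure)
  then have h_measurable: "(\<lambda>(y, t). ?h y t) \<in> borel_measurable (M \<Otimes>\<^sub>M lborel)"
    by (subst measurable_cong[where g = "indicator {p\<in>space (M \<Otimes>\<^sub>M lborel). fst p \<in> S \<and> 0 < snd p \<and> snd p < g (fst p)}"])
       (auto intro!: borel_measurable_indicator)
  have "emeasure lborel {0<..<r} = ennreal r" for r :: real
    by (cases "0 \<le> r") (auto simp: ennreal_neg)
  then have "(\<integral>\<^sup>+y. indicator S y * ennreal (g y) \<partial>M) = (\<integral>\<^sup>+y. (\<integral>\<^sup>+t. ?h y t \<partial>lborel) \<partial>M)"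
    by (intro nn_integral_cong) (simp add: nn_integral_cmult)
  also have "\<dots> = (\<integral>\<^sup>+t. (\<integral>\<^sup>+y. ?h y t \<partial>M) \<partial>lborel)"
    by (rule Fubini'[OF h_measurable, symmetric])
  also have "\<dots> = (\<integral>\<^sup>+t. indicator {0<..} t * emeasure M {y\<in>S. t < g y} \<partial>lborel)"
  proof (intro nn_integral_cong)
    fix t :: real
    have "{y\<in>S. t < g y} = {y\<in>space M. y \<in> S \<and> t < g y}"
      using sets.sets_into_space[OF assms(3)] by auto
    then have [measurable]: "{y\<in>S. t < g y} \<in> sets M" by simp
    have "(\<integral>\<^sup>+y. ?h y t \<partial>M) = (\<integral>\<^sup>+y. indicator {0<..} t * indicator {y\<in>S. t < g y} y \<partial>M)"
      by (intro nn_integral_cong) (auto simp: indicator_def)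
    then show "(\<integral>\<^sup>+y. ?h y t \<partial>M) = indicator {0<..} t * emeasure M {y\<in>S. t < g y}"
      by (simp add: nn_integral_cmult_indicator)
  qed
  finally show ?thesis .
qed

lemma (in finite_measure) borel_measurable_measure_tail:
  fixes g :: "'a \<Rightarrow> real"
  assumes [measurable]: "g \<in> borel_measurable M" "S \<in> sets M"
  shows "(\<lambda>t. measure M {y\<in>S. t < g y}) \<in> borel_measurable borel"
proof -
  have "mono (\<lambda>t. - measure M {y\<in>S. t < g y})"
  proof (rule monoI)
    fix s t :: real assume "s \<le> t"
    have "{y\<in>S. t < g y} = {y\<in>space M. y \<in> S \<and> t < g y}"
      using sets.sets_into_space[OF assms(2)] by auto
    then have "measure M {y\<in>S. t < g y} \<le> measure M {y\<in>S. s < g y}"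
      using \<open>s \<le> t\<close> by (intro finite_measure_mono) auto
    then show "- measure M {y\<in>S. s < g y} \<le> - measure M {y\<in>S. t < g y}" by simp
  qed
  then have "(\<lambda>t. - measure M {y\<in>S. t < g y}) \<in> borel_measurable borel"
    by (rule borel_measurable_mono)
  then show ?thesis using borel_measurable_uminus by fastforce
qed

lemma ennreal_sum_le_nn_integral_sum:
  fixes c z :: "'i \<Rightarrow> real" and Q :: "'i \<Rightarrow> 'b \<Rightarrow> real"
  assumes "finite I" and c: "\<And>i. 0 \<le> c i" and z: "\<And>i. 0 \<le> z i"
    and Q: "\<And>i. Q i \<in> borel_measurable N" "\<And>i t. 0 \<le> Q i t"
    and z_le: "\<And>i. ennreal (z i) \<le> (\<integral>\<^sup>+t. Q i t \<partial>N)"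
  shows "ennreal (\<Sum>i\<in>I. c i * z i) \<le> (\<integral>\<^sup>+t. ennreal (\<Sum>i\<in>I. c i * Q i t) \<partial>N)"
proof -
  have "ennreal (\<Sum>i\<in>I. c i * z i) = (\<Sum>i\<in>I. ennreal (c i) * ennreal (z i))"
    using c z by (simp add: sum_ennreal[symmetric] ennreal_mult)
  also have "\<dots> \<le> (\<Sum>i\<in>I. ennreal (c i) * (\<integral>\<^sup>+t. Q i t \<partial>N))"
    by (intro sum_mono mult_left_mono z_le) simp
  also have "\<dots> = (\<integral>\<^sup>+t. (\<Sum>i\<in>I. ennreal (c i) * ennreal (Q i t)) \<partial>N)"
    using Q(1) by (simp add: nn_integral_sum nn_integral_cmult)
  also have "\<dots> = (\<integral>\<^sup>+t. ennreal (\<Sum>i\<in>I. c i * Q i t) \<partial>N)"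
    using c Q(2) by (simp add: sum_ennreal[symmetric] ennreal_mult)
  finally show ?thesis .
qed

lemma (in prob_space) integrable_if_lorentz_p1_finite:
  assumes [measurable]: "f \<in> borel_measurable M" and "1 \<le> p" and "lorentz_p1 M p f \<noteq> \<infinity>"
  shows "integrable M f"
proof (rule integrableI_bounded)
  have "(\<integral>\<^sup>+x. ennreal (norm (f x)) \<partial>M) = (\<integral>\<^sup>+x. indicator (space M) x * ennreal \<bar>f x\<bar> \<partial>M)"
    by (intro nn_integral_cong) simp
  also have "\<dots> = (\<integral>\<^sup>+t. indicator {0<..} t * emeasure M {x\<in>space M. t < \<bar>f x\<bar>} \<partial>lborel)"
    by (rule nn_integral_layer_cake) (auto simp: sigma_finite_measure_axioms)
  also have "\<dots> \<le> lorentz_p1 M p f"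
    unfolding lorentz_p1_def
  proof (intro nn_integral_mono mult_left_mono)
    fix t :: real
    let ?D = "measure M {x\<in>space M. t < \<bar>f x\<bar>}"
    have "?D \<le> ?D powr (1 / p)"
      using powr_mono'[of "1 / p" 1 ?D] \<open>1 \<le> p\<close> by (cases "?D = 0") auto
    then show "emeasure M {x\<in>space M. t < \<bar>f x\<bar>} \<le> ennreal (measure M {x\<in>space M. \<bar>f x\<bar> > t} powr (1 / p))"
      by (simp add: emeasure_eq_measure)
  qed simp
  finally show "(\<integral>\<^sup>+x. ennreal (norm (f x)) \<partial>M) < \<infinity>"
    using assms(3) by (simp add: less_top order.strict_trans1)
qed simp

lemma sigma_sets_partition_cases:
  assumes "disjoint A" "\<Union>A = \<Omega>" "S \<in> sigma_sets \<Omega> A" "w \<in> A"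
  shows "w \<subseteq> S \<or> w \<inter> S = {}"
  using assms(3)
proof (induction rule: sigma_sets.induct)
  case (Basic v)
  then show ?case using assms(1,4) by (auto simp: disjoint_def)
next
  case (Compl S)
  then show ?case using assms(2,4) by blast
qed auto

locale atomic_filtration = finite_measure M for M :: "'a measure" +
  fixes F :: "nat \<Rightarrow> 'a measure" and A :: "nat \<Rightarrow> 'a set set"
  assumes subalgebra_F: "\<And>n. subalgebra M (F n)"
    and sets_F_mono: "\<And>n. sets (F n) \<subseteq> sets (F (Suc n))"
    and countable_atoms: "\<And>n. countable (A n)"
    and disjoint_atoms: "\<And>n. disjoint (A n)"
    and Union_atoms: "\<And>n. \<Union>(A n) = space M"
    and atoms_pos: "\<And>n w. w \<in> A n \<Longrightarrow> w \<in> sets M \<and> measure M w > 0"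
    and sets_F_eq: "\<And>n. sets (F n) = sigma_sets (space M) (A n)"
begin

definition atom :: "nat \<Rightarrow> 'a \<Rightarrow> 'a set" where
  "atom n x = (THE w. w \<in> A n \<and> x \<in> w)"

lemma atom_eq: "w \<in> A n \<Longrightarrow> x \<in> w \<Longrightarrow> atom n x = w"
  unfolding atom_def using disjoint_atoms[of n] by (intro the_equality) (auto simp: disjoint_def)

lemma atom_in_atoms: "x \<in> space M \<Longrightarrow> atom n x \<in> A n"
  and mem_atom: "x \<in> space M \<Longrightarrow> x \<in> atom n x"
  using Union_atoms[of n] atom_eq by blast+

lemma sets_F_atom: "x \<in> space M \<Longrightarrow> atom n x \<in> sets (F n)"
  using atom_in_atoms sets_F_eq by auto

lemma sets_atom: "x \<in> space M \<Longrightarrow> atom n x \<in> sets M"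
  using atom_in_atoms atoms_pos by blast

lemma measure_atom_pos: "x \<in> space M \<Longrightarrow> 0 < measure M (atom n x)"
  using atom_in_atoms atoms_pos by blast

lemma space_F: "space (F n) = space M"
  using subalgebra_F[of n] by (simp add: subalgebra_def)

lemma atom_subset_or_disjoint:
  "S \<in> sets (F n) \<Longrightarrow> x \<in> space M \<Longrightarrow> atom n x \<subseteq> S \<or> atom n x \<inter> S = {}"
  using sigma_sets_partition_cases[OF disjoint_atoms Union_atoms] atom_in_atoms sets_F_eq by metis

lemma atom_antimono:
  assumes "n \<le> m" "x \<in> space M"
  shows "atom m x \<subseteq> atom n x"
proof -
  have "sets (F n) \<subseteq> sets (F m)"
    using \<open>n \<le> m\<close> by (induction m rule: dec_induct) (use sets_F_mono in auto)
  then show ?thesis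
    using atom_subset_or_disjoint[of "atom n x" m x] sets_F_atom mem_atom assms(2) by blast
qed

lemma measurable_F_const_on_atom:
  fixes g :: "'a \<Rightarrow> 'b::t1_space"
  assumes "g \<in> borel_measurable (F n)" "x \<in> space M" "y \<in> atom n x"
  shows "g y = g x"
proof -
  have "g -` {g x} \<inter> space M \<in> sets (F n)"
    using measurable_sets[OF assms(1)] space_F by (metis closed_singleton borel_closed)
  then show ?thesis
    using atom_subset_or_disjoint mem_atom assms by blast
qed

lemma measurable_F_if_const_on_atoms:
  fixes g :: "'a \<Rightarrow> real"
  assumes const: "\<And>x y. x \<in> space M \<Longrightarrow> y \<in> atom n x \<Longrightarrow> g y = g x"
  shows "g \<in> borel_measurable (F n)"
proof (rule measurableI)
  fix B :: "real set"
  have "g -` B \<inter> space (F n) = \<Union>{w \<in> A n. \<exists>y\<in>w. g y \<in> B}"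
  proof safe
    fix x assume "x \<in> space (F n)" "g x \<in> B"
    then show "x \<in> \<Union>{w \<in> A n. \<exists>y\<in>w. g y \<in> B}"
      using atom_in_atoms mem_atom space_F by blast
  next
    fix x w y assume "w \<in> A n" "x \<in> w" "y \<in> w" "g y \<in> B"
    moreover have "y \<in> space M" "x \<in> space M" using \<open>w \<in> A n\<close> \<open>x \<in> w\<close> \<open>y \<in> w\<close> Union_atoms by auto
    ultimately show "x \<in> g -` B" "x \<in> space (F n)"
      using const[of y x] atom_eq space_F by auto
  qed
  moreover have "\<Union>{w \<in> A n. \<exists>y\<in>w. g y \<in> B} \<in> sets (F n)"
    using countable_atoms[of n] sets_F_eq[of n]
    by (intro sets.countable_Union) (auto intro: countable_subset)
  ultimately show "g -` B \<inter> space (F n) \<in> sets (F n)" by simp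
qed simp

lemma atom_weight_eq: "x \<in> space M \<Longrightarrow> atom_weight M (A n) x = measure M (atom n x)"
proof -
  assume x: "x \<in> space M"
  have "atom_weight M (A n) x = (\<Sum>\<^sub>\<infinity>w\<in>{atom n x}. measure M w * indicator w x)"
    unfolding atom_weight_def
    using atom_in_atoms[OF x] atom_eq[of _ n x] by (intro infsum_cong_neutral) (auto split: split_indicator)
  then show ?thesis using mem_atom[OF x] by simp
qed

lemma borel_measurable_atom_weight: "atom_weight M (A n) \<in> borel_measurable M"
proof -
  have "(\<lambda>x. measure M (atom n x)) \<in> borel_measurable (F n)"
    by (rule measurable_F_if_const_on_atoms) (metis atom_eq atom_in_atoms)
  then have "(\<lambda>x. measure M (atom n x)) \<in> borel_measurable M"
    by (rule measurable_from_subalg[OF subalgebra_F])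
  then show ?thesis by (rule measurable_cong[THEN iffD1, rotated]) (simp add: atom_weight_eq)
qed

lemma set_integral_atom:
  fixes g :: "'a \<Rightarrow> real"
  assumes "g \<in> borel_measurable (F n)" "x \<in> space M"
  shows "(\<integral>y\<in>atom n x. g y \<partial>M) = measure M (atom n x) * g x"
proof -
  have "(\<integral>y\<in>atom n x. g y \<partial>M) = (\<integral>y\<in>atom n x. g x \<partial>M)"
    using measurable_F_const_on_atom[OF assms] sets_atom[OF assms(2)]
    by (intro set_lebesgue_integral_cong) auto
  then show ?thesis
    using sets_atom[OF assms(2)] by (simp add: set_integral_const emeasure_eq_measure)
qed

lemma real_cond_exp_atom:
  assumes "integrable M f" "x \<in> space M"
  shows "real_cond_exp M (F n) f x = (\<integral>y\<in>atom n x. f y \<partial>M) / measure M (atom n x)"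
proof -
  interpret sigma_finite_subalgebra M "F n"
    by (intro finite_measure_subalgebra_is_sigma_finite)
       (simp add: finite_measure_subalgebra_def finite_measure_subalgebra_axioms_def
         subalgebra_F finite_measure_axioms)
  have "(\<integral>y\<in>atom n x. f y \<partial>M) = measure M (atom n x) * real_cond_exp M (F n) f x"
    using real_cond_exp_intA[OF assms(1) sets_F_atom[OF assms(2)]] set_integral_atom[OF _ assms(2)]
    by simp
  then show ?thesis using measure_atom_pos[OF assms(2), of n] by (auto simp: field_simps)
qed

lemma real_cond_exp_eq_self:
  assumes "integrable M f" "f \<in> borel_measurable (F N)" "N \<le> n" "x \<in> space M"
  shows "real_cond_exp M (F n) f x = f x"
proof -
  have "(\<integral>y\<in>atom n x. f y \<partial>M) = (\<integral>y\<in>atom n x. f x \<partial>M)"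
    using measurable_F_const_on_atom[OF assms(2,4)] atom_antimono[OF assms(3,4)] sets_atom[OF assms(4)]
    by (intro set_lebesgue_integral_cong) auto
  then show ?thesis
    using real_cond_exp_atom[OF assms(1,4)] sets_atom[OF assms(4)] measure_atom_pos[OF assms(4), of n]
    by (auto simp: set_integral_const emeasure_eq_measure)
qed

definition cond_tail :: "nat \<Rightarrow> 'a \<Rightarrow> ('a \<Rightarrow> real) \<Rightarrow> real \<Rightarrow> real" where
  "cond_tail n x f t = measure M {y\<in>atom n x. t < \<bar>f y\<bar>} / measure M (atom n x)"

lemma abs_real_cond_exp_le:
  assumes f: "integrable M f" and x: "x \<in> space M"
  shows "ennreal \<bar>real_cond_exp M (F n) f x\<bar> \<le> (\<integral>\<^sup>+t. indicator {0<..} t * cond_tail n x f t \<partial>lborel)"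
proof -
  have [measurable]: "f \<in> borel_measurable M" "atom n x \<in> sets M" using f sets_atom[OF x] by auto
  have [measurable]: "(\<lambda>t. measure M {y\<in>atom n x. t < \<bar>f y\<bar>}) \<in> borel_measurable borel"
    by (rule borel_measurable_measure_tail) auto
  let ?w = "measure M (atom n x)"
  have "ennreal \<bar>\<integral>y\<in>atom n x. f y \<partial>M\<bar> = ennreal (norm (\<integral>y. indicator (atom n x) y *\<^sub>R f y \<partial>M))"
    by (simp add: set_lebesgue_integral_def)
  also have "\<dots> \<le> (\<integral>\<^sup>+y. norm (indicator (atom n x) y *\<^sub>R f y) \<partial>M)"
    by (intro integral_norm_bound_ennreal integrable_mult_indicator f) simp
  also have "\<dots> = (\<integral>\<^sup>+y. indicator (atom n x) y * ennreal \<bar>f y\<bar> \<partial>M)"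
    by (intro nn_integral_cong) (auto simp: indicator_def)
  also have "\<dots> = (\<integral>\<^sup>+t. ennreal (indicator {0<..} t * measure M {y\<in>atom n x. t < \<bar>f y\<bar>}) \<partial>lborel)"
    by (subst nn_integral_layer_cake) (auto simp: sigma_finite_measure_axioms emeasure_eq_measure
        ennreal_mult intro!: nn_integral_cong split: split_indicator)
  finally have "ennreal \<bar>\<integral>y\<in>atom n x. f y \<partial>M\<bar> * ennreal (1 / ?w)
      \<le> (\<integral>\<^sup>+t. ennreal (indicator {0<..} t * measure M {y\<in>atom n x. t < \<bar>f y\<bar>}) \<partial>lborel) * ennreal (1 / ?w)"
    by (rule mult_right_mono) simp
  also have "\<dots> = (\<integral>\<^sup>+t. indicator {0<..} t * cond_tail n x f t \<partial>lborel)"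
    using measure_atom_pos[OF x]
    by (subst nn_integral_multc[symmetric])
       (auto simp: cond_tail_def ennreal_mult[symmetric] indicator_def intro!: nn_integral_cong)
  finally show ?thesis
    using real_cond_exp_atom[OF f x] measure_atom_pos[OF x]
    by (simp add: ennreal_mult[symmetric])
qed

lemma cond_tail_nonneg: "0 \<le> cond_tail n x f t"
  by (simp add: cond_tail_def)

lemma cond_tail_le_1:
  assumes "x \<in> space M" shows "cond_tail n x f t \<le> 1"
proof -
  have "measure M {y\<in>atom n x. t < \<bar>f y\<bar>} \<le> measure M (atom n x)"
    using sets_atom[OF assms] by (intro finite_measure_mono) auto
  then show ?thesis using measure_atom_pos[OF assms, of n] by (simp add: cond_tail_def)
qed

lemma cond_tail_mult_measure_atom_le:
  assumes "f \<in> borel_measurable M" "x \<in> space M"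
  shows "cond_tail n x f t * measure M (atom n x) \<le> measure M {y\<in>space M. t < \<bar>f y\<bar>}"
proof -
  have "measure M {y\<in>atom n x. t < \<bar>f y\<bar>} \<le> measure M {y\<in>space M. t < \<bar>f y\<bar>}"
    using assms sets.sets_into_space[OF sets_atom[OF assms(2)]] by (intro finite_measure_mono) auto
  then show ?thesis using measure_atom_pos[OF assms(2), of n] by (simp add: cond_tail_def)
qed

lemma borel_measurable_cond_tail:
  assumes "f \<in> borel_measurable M" "x \<in> space M"
  shows "cond_tail n x f \<in> borel_measurable borel"
  unfolding cond_tail_def using assms sets_atom[OF assms(2)]
  by (intro borel_measurable_divide borel_measurable_measure_tail) auto

lemma I_alpha_eq_sum:
  assumes "integrable M f" "f \<in> borel_measurable (F N)" "x \<in> space M"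
  shows "I_alpha M F A a f x = (\<Sum>n<N. measure M (atom (Suc n) x) powr a *
      (real_cond_exp M (F (Suc n)) f x - real_cond_exp M (F n) f x))"
  unfolding I_alpha_def atom_weight_eq[OF assms(3)]
  by (rule suminf_finite) (simp_all add: real_cond_exp_eq_self[OF assms(1,2) _ assms(3)])

lemma borel_measurable_I_alpha: "I_alpha M F A a f \<in> borel_measurable M"
proof -
  note [measurable] = borel_measurable_atom_weight
  have "I_alpha M F A a f = (\<lambda>x. \<Sum>n. atom_weight M (A (Suc n)) x powr a *
      (real_cond_exp M (F (Suc n)) f x - real_cond_exp M (F n) f x))"
    by (simp add: I_alpha_def fun_eq_iff)
  also have "\<dots> \<in> borel_measurable M" by measurable
  finally show ?thesis .
qed

lemma abs_I_alpha_le: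
  assumes a: "0 < a" "a < 1" and f: "integrable M f" "f \<in> borel_measurable (F N)"
    and x: "x \<in> space M"
  shows "ennreal \<bar>I_alpha M F A a f x\<bar> \<le> ennreal (2 + 1 / (1 - a)) * lorentz_p1 M (1 / a) f"
proof -
  have [measurable]: "f \<in> borel_measurable M" using f by simp
  define b where "b n = measure M (atom n x)" for n
  define c where "c n = \<bar>abel_coeff (\<lambda>n. b n powr a) N n\<bar>" for n
  define Q where "Q n t = indicator {0<..} t * cond_tail n x f t" for n t
  let ?y = "\<lambda>n. real_cond_exp M (F n) f x"
  let ?D = "\<lambda>t. measure M {y\<in>space M. t < \<bar>f y\<bar>}"
  have b: "0 < b n" "b (Suc n) \<le> b n" for n
    using measure_atom_pos[OF x] atom_antimono[of n "Suc n" x] sets_atom[OF x] x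
    by (auto simp: b_def intro!: finite_measure_mono)
  have "\<bar>I_alpha M F A a f x\<bar> = \<bar>\<Sum>n\<le>N. abel_coeff (\<lambda>n. b n powr a) N n * ?y n\<bar>"
    by (simp add: I_alpha_eq_sum[OF f x] b_def flip: sum_by_parts_abel_coeff)
  also have "\<dots> \<le> (\<Sum>n\<le>N. c n * \<bar>?y n\<bar>)"
    unfolding c_def by (rule order.trans[OF sum_abs]) (simp add: abs_mult)
  finally have "ennreal \<bar>I_alpha M F A a f x\<bar> \<le> ennreal (\<Sum>n\<le>N. c n * \<bar>?y n\<bar>)"
    by (rule ennreal_leI)
  also have "\<dots> \<le> (\<integral>\<^sup>+t. ennreal (\<Sum>n\<le>N. c n * Q n t) \<partial>lborel)"
    using abs_real_cond_exp_le[OF f(1) x] borel_measurable_cond_tail[OF _ x]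
    by (intro ennreal_sum_le_nn_integral_sum) (auto simp: c_def Q_def cond_tail_nonneg)
  also have "\<dots> \<le> (\<integral>\<^sup>+t. ennreal (2 + 1 / (1 - a)) * (indicator {0<..} t * ennreal (?D t powr a)) \<partial>lborel)"
  proof (rule nn_integral_mono)
    fix t :: real
    show "ennreal (\<Sum>n\<le>N. c n * Q n t) \<le> ennreal (2 + 1 / (1 - a)) * (indicator {0<..} t * ennreal (?D t powr a))"
    proof (cases "0 < t")
      case True
      have "(\<Sum>n\<le>N. c n * Q n t) \<le> (2 + 1 / (1 - a)) * ?D t powr a"
        unfolding c_def Q_def using True b cond_tail_mult_measure_atom_le[OF _ x]
        by (intro sum_abs_abel_coeff_powr_le a) (auto simp: cond_tail_nonneg cond_tail_le_1[OF x] b_def)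
      then have "ennreal (\<Sum>n\<le>N. c n * Q n t) \<le> ennreal ((2 + 1 / (1 - a)) * ?D t powr a)"
        by (rule ennreal_leI)
      then show ?thesis using True a by (simp add: ennreal_mult)
    qed (simp add: Q_def)
  qed
  also have "\<dots> = ennreal (2 + 1 / (1 - a)) * lorentz_p1 M (1 / a) f"
    by (simp add: lorentz_p1_def nn_integral_cmult)
  finally show ?thesis .
qed

end

theorem lemma3:
  fixes M :: "'a measure" and \<F> :: "nat \<Rightarrow> 'a measure" and A :: "nat \<Rightarrow> 'a set set"
    and \<alpha> p :: real
  assumes "prob_space M"
    and "atomless M"
    and "\<And>n. subalgebra M (\<F> n)"
    and "\<And>n. sets (\<F> n) \<subseteq> sets (\<F> (Suc n))"
    and "\<And>n. countable (A n)"
    and "\<And>n. disjoint (A n)"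
    and "\<And>n. \<Union> (A n) = space M"
    and "\<And>n w. w \<in> A n \<Longrightarrow> w \<in> sets M \<and> measure M w > 0"
    and "\<And>n. sets (\<F> n) = sigma_sets (space M) (A n)"
    and "sets M = sigma_sets (space M) (\<Union>n. sets (\<F> n))"
    and "0 < \<alpha>" "\<alpha> < 1" "p = 1 / \<alpha>"
  shows "\<exists>C::real. C > 0 \<and> (\<forall>f N. f \<in> borel_measurable (\<F> N) \<longrightarrow>
           esssup M (\<lambda>x. ereal \<bar>I_alpha M \<F> A \<alpha> f x\<bar>)
             \<le> ereal C * enn2ereal (lorentz_p1 M p f))"
proof -
  interpret prob_space M by fact
  interpret atomic_filtration M \<F> A
    using assms(3-9) by unfold_locales auto
  define C where "C = 2 + 1 / (1 - \<alpha>)"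
  have "0 < C" using assms(11,12) by (simp add: C_def add_pos_nonneg)
  moreover have "esssup M (\<lambda>x. ereal \<bar>I_alpha M \<F> A \<alpha> f x\<bar>) \<le> ereal C * enn2ereal (lorentz_p1 M p f)"
    if fN: "f \<in> borel_measurable (\<F> N)" for f N
  proof (cases "lorentz_p1 M p f = \<infinity>")
    case False
    have "integrable M f"
      using measurable_from_subalg[OF assms(3) fN] assms(11-13) False
      by (intro integrable_if_lorentz_p1_finite) auto
    have "ennreal \<bar>I_alpha M \<F> A \<alpha> f x\<bar> \<le> ennreal C * lorentz_p1 M p f" if "x \<in> space M" for x
      using abs_I_alpha_le[OF assms(11,12) \<open>integrable M f\<close> fN that] by (simp add: C_def assms(13))
    then have "ereal \<bar>I_alpha M \<F> A \<alpha> f x\<bar> \<le> ereal C * enn2ereal (lorentz_p1 M p f)" if "x \<in> space M" for x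
      using that \<open>0 < C\<close> by (fastforce simp: less_eq_ennreal.rep_eq times_ennreal.rep_eq)
    then show ?thesis
      using borel_measurable_I_alpha by (intro esssup_I AE_I2) auto
  qed (use \<open>0 < C\<close> in simp)
  ultimately show ?thesis by blast
qed

end
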